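(* (1) Let $q,m$ be positive integers with $q<m\le 2q$ and let $s\in\{2,3\}$. Then $K_{2q}^{RT}(2m,s,2ms-3)\le q\,\big(OCAN(3,m,s,2)+CAN(2,m,2)\big)$. (2) Let $q,v\ge2$ and $m,s,t$ be positive integers with $t\ge 2$, $s\le t\le ms$ and $(t-1)q+1\le m\le (t-1)qv$. Then $K_{qv}^{RT}(m,s,ms-t)\le q\,OCAN(t,m,s,v)$.
   Context: For positive integers $m,s$, the RT poset $[m\times s]$ is the set $\{1,\ldots,ms\}$ partitioned into $m$ blocks $B_i=\{is+1,\ldots,(i+1)s\}$; each block is a chain under the usual order of the integers, and elements of different blocks are incomparable. An ideal is a down-closed subset; an anti-ideal is the complement of an ideal; $\langle A\rangle$ denotes the smallest ideal containing $A$. For $x,y\in\mathbb{Z}_q^{ms}$, $d_{RT}(x,y)=|\langle\{i:x_i\neq y_i\}\rangle|$. A code $C\subseteq \mathbb{Z}_q^{ms}$ is an $R$-covering if every $x\in\mathbb{Z}_q^{ms}$ has some $c\in C$ with $d_{RT}(x,c)\le R$; $K_q^{RT}(m,s,R)$ is the smallest size of an $R$-covering. An ordered covering array $OCA(N;t,m,s,v)$ ($2\le t\le ms$) is an $N\times ms$ array over an alphabet of size $v$ with columns labeled by the elements of $[m\times s]$ such that for every anti-ideal $J$ of size $t$, every $t$-tuple over the alphabet appears as a row of the $N\times t$ subarray formed by the columns labeled by $J$; $OCAN(t,m,s,v)$ is the least such $N$. A covering array $CA(N;t,n,v)$ is an $OCA(N;t,n,1,v)$, i.e. an $N\times n$ array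 in which every set of $t$ columns contains every $t$-tuple as a row; $CAN(t,n,v)$ is the least such $N$. *)

theory Defs
  imports Main
begin

text \<open>RT poset [m x s], 0-indexed: elements 0..<m*s, block of i is i div s;
  x \<le>_RT y iff same block and x \<le> y.\<close>

definition rt_le :: "nat \<Rightarrow> nat \<Rightarrow> nat \<Rightarrow> bool" where
  "rt_le s x y \<longleftrightarrow> x div s = y div s \<and> x \<le> y"

definition rt_ideal :: "nat \<Rightarrow> nat \<Rightarrow> nat set \<Rightarrow> bool" where
  "rt_ideal m s I \<longleftrightarrow> I \<subseteq> {0..<m*s} \<and>
     (\<forall>y\<in>I. \<forall>x<m*s. rt_le s x y \<longrightarrow> x \<in> I)"

definition rt_anti_ideal :: "nat \<Rightarrow> nat \<Rightarrow> nat set \<Rightarrow> bool" where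
  "rt_anti_ideal m s J \<longleftrightarrow> J \<subseteq> {0..<m*s} \<and> rt_ideal m s ({0..<m*s} - J)"

definition rt_gen :: "nat \<Rightarrow> nat \<Rightarrow> nat set \<Rightarrow> nat set" where
  "rt_gen m s A = {x. x < m*s \<and> (\<exists>y\<in>A. rt_le s x y)}"

definition words :: "nat \<Rightarrow> nat \<Rightarrow> nat list set" where
  "words q n = {x. length x = n \<and> set x \<subseteq> {0..<q}}"

definition d_RT :: "nat \<Rightarrow> nat \<Rightarrow> nat list \<Rightarrow> nat list \<Rightarrow> nat" where
  "d_RT m s x y = card (rt_gen m s {i. i < m*s \<and> x ! i \<noteq> y ! i})"

definition rt_covering :: "nat \<Rightarrow> nat \<Rightarrow> nat \<Rightarrow> nat \<Rightarrow> nat list set \<Rightarrow> bool" where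
  "rt_covering q m s R C \<longleftrightarrow> C \<subseteq> words q (m*s) \<and>
     (\<forall>x\<in>words q (m*s). \<exists>c\<in>C. d_RT m s x c \<le> R)"

definition K_RT :: "nat \<Rightarrow> nat \<Rightarrow> nat \<Rightarrow> nat \<Rightarrow> nat" where
  "K_RT q m s R = (LEAST k. \<exists>C. rt_covering q m s R C \<and> card C = k)"

definition is_OCA :: "nat list list \<Rightarrow> nat \<Rightarrow> nat \<Rightarrow> nat \<Rightarrow> nat \<Rightarrow> bool" where
  "is_OCA A t m s v \<longleftrightarrow> 2 \<le> t \<and> t \<le> m*s \<and> set A \<subseteq> words v (m*s) \<and>
     (\<forall>J. rt_anti_ideal m s J \<and> card J = t \<longrightarrow>
        (\<forall>f. (\<forall>j\<in>J. f j < v) \<longrightarrow> (\<exists>r\<in>set A. \<forall>j\<in>J. r ! j = f j)))"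

definition OCAN :: "nat \<Rightarrow> nat \<Rightarrow> nat \<Rightarrow> nat \<Rightarrow> nat" where
  "OCAN t m s v = (LEAST N. \<exists>A. is_OCA A t m s v \<and> length A = N)"

definition CAN :: "nat \<Rightarrow> nat \<Rightarrow> nat \<Rightarrow> nat" where
  "CAN t n v = OCAN t n 1 v"

end

theory Submission
  imports Defs "HOL-Library.FuncSet"
begin

(*
  Write a symbol of Z_{qv} as k v + a with k < q and a < v. Given a word x on more than
  (t - 1) q blocks, the pigeonhole principle yields t blocks whose top elements carry the same
  high digit k in x. The tops of any t blocks form an anti-ideal, so if a v-ary array realises
  every pattern on the tops of every t blocks, then some row, with k v added to each entry,
  agrees with x on an anti-ideal of size t, i.e. lies at RT distance at most m s - t from x.

  For (2) the OCA itself is such an array. For (1) the 2m blocks are paired as b and b + m.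
  Rows of an OCA(3, m, s, 2) written twice handle three tops in distinct pairs, and two tops of
  one pair carrying equal values: padding the tops of blocks i and j with the element just below
  the top of block i (here s >= 2 is needed) gives an anti-ideal of size 3. Rows of a CA(2, m, 2),
  each entry repeated s times and followed by the complemented copy, handle two tops of one pair
  carrying different values.
*)

lemma rt_anti_ideal_if_upward_closed:
  assumes "J \<subseteq> {..<m*s}" and "\<And>j y. j \<in> J \<Longrightarrow> y < m*s \<Longrightarrow> rt_le s j y \<Longrightarrow> y \<in> J"
  shows "rt_anti_ideal m s J"
  using assms unfolding rt_anti_ideal_def rt_ideal_def by auto

lemma d_RT_le_if_agree_on_anti_ideal:
  assumes J: "rt_anti_ideal m s J" and agree: "\<forall>j\<in>J. x ! j = c ! j"
  shows "d_RT m s x c \<le> m*s - card J"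
proof -
  have "rt_gen m s {i. i < m*s \<and> x ! i \<noteq> c ! i} \<subseteq> {0..<m*s} - J"
  proof
    fix z assume "z \<in> rt_gen m s {i. i < m*s \<and> x ! i \<noteq> c ! i}"
    then obtain y where z: "z < m*s" "rt_le s z y" and y: "y < m*s" "x ! y \<noteq> c ! y"
      unfolding rt_gen_def by blast
    have "y \<in> {0..<m*s} - J" using y agree by auto
    then show "z \<in> {0..<m*s} - J"
      using J z unfolding rt_anti_ideal_def rt_ideal_def by blast
  qed
  then have "d_RT m s x c \<le> card ({0..<m*s} - J)"
    unfolding d_RT_def by (intro card_mono) auto
  also have "\<dots> = m*s - card J"
    using J unfolding rt_anti_ideal_def by (subst card_Diff_subset) (auto intro: finite_subset)
  finally show ?thesis .
qed

lemma nth_words_less: "x \<in> words q n \<Longrightarrow> j < n \<Longrightarrow> x ! j < q"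
  unfolding words_def using nth_mem by fastforce

definition rt_top :: "nat \<Rightarrow> nat \<Rightarrow> nat" where
  "rt_top s b = b*s + (s - 1)"

lemma rt_top_div [simp]:
  assumes "0 < s" shows "rt_top s b div s = b"
proof -
  have "rt_top s b div s = ((s - 1) + b*s) div s" unfolding rt_top_def by (simp only: add.commute)
  also have "\<dots> = b + (s - 1) div s" by (rule div_mult_self1) (use assms in simp)
  finally show ?thesis using assms by simp
qed

lemma rt_top_add: "rt_top s (m + b) = m*s + rt_top s b"
  unfolding rt_top_def by (simp add: algebra_simps)

lemma rt_top_less: "0 < s \<Longrightarrow> b < m \<Longrightarrow> rt_top s b < m*s"
proof -
  assume "0 < s" "b < m"
  then have "b*s + s \<le> m*s" using mult_le_mono1[of "Suc b" m s] by simp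
  then show ?thesis using \<open>0 < s\<close> unfolding rt_top_def by linarith
qed

lemma inj_rt_top: "0 < s \<Longrightarrow> inj (rt_top s)"
  by (metis injI rt_top_div)

lemma rt_top_minus_one_div:
  assumes "2 \<le> s" shows "(rt_top s b - 1) div s = b"
proof -
  have "rt_top s b - 1 = (s - 2) + b*s" unfolding rt_top_def using assms by simp
  then have "(rt_top s b - 1) div s = ((s - 2) + b*s) div s" by (simp only:)
  also have "\<dots> = b + (s - 2) div s" by (rule div_mult_self1) (use assms in simp)
  finally show ?thesis using assms by simp
qed

lemma rt_le_imp_le_rt_top:
  assumes "0 < s" and "rt_le s x y"
  shows "y \<le> rt_top s (x div s)"
proof -
  have "y = (x div s)*s + y mod s"
    using assms(2) div_mult_mod_eq[of y s] unfolding rt_le_def by simp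
  moreover have "y mod s < s" using assms(1) by simp
  ultimately show ?thesis unfolding rt_top_def by linarith
qed

lemma rt_anti_ideal_tops:
  assumes "0 < s" and "B \<subseteq> {..<m}"
  shows "rt_anti_ideal m s (rt_top s ` B)"
proof (rule rt_anti_ideal_if_upward_closed)
  show "rt_top s ` B \<subseteq> {..<m*s}" using assms rt_top_less by auto
next
  fix j y assume "j \<in> rt_top s ` B" and "rt_le s j y"
  moreover from this have "y \<le> rt_top s (j div s)" using assms(1) rt_le_imp_le_rt_top by blast
  ultimately show "y \<in> rt_top s ` B" using assms(1) unfolding rt_le_def by force
qed

lemma rt_anti_ideal_insert_below_top:
  assumes "2 \<le> s" and "i \<in> B" and "B \<subseteq> {..<m}"
  shows "rt_anti_ideal m s (insert (rt_top s i - 1) (rt_top s ` B))"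
proof (rule rt_anti_ideal_if_upward_closed)
  have "rt_top s ` B \<subseteq> {..<m*s}" using assms rt_top_less[of s] by auto
  then show "insert (rt_top s i - 1) (rt_top s ` B) \<subseteq> {..<m*s}"
    using assms(2) by auto
next
  fix j y assume j: "j \<in> insert (rt_top s i - 1) (rt_top s ` B)" and "rt_le s j y"
  then have le: "j \<le> y" "y \<le> rt_top s (j div s)"
    using assms(1) rt_le_imp_le_rt_top[of s j y] unfolding rt_le_def by auto
  from j show "y \<in> insert (rt_top s i - 1) (rt_top s ` B)"
  proof
    assume j: "j = rt_top s i - 1"
    then have "y \<le> rt_top s i" using le(2) assms(1) rt_top_minus_one_div[of s i] by simp
    moreover have "1 \<le> rt_top s i" using assms(1) unfolding rt_top_def by simp
    ultimately have "y = rt_top s i - 1 \<or> y = rt_top s i" using le(1) j by linarith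
    then show ?thesis using assms(2) by blast
  next
    assume "j \<in> rt_top s ` B"
    then show ?thesis using le assms(1) by auto
  qed
qed

lemma pigeonhole_large_fibre:
  assumes "\<forall>b<n. f b < (q::nat)" and "(t - 1)*q < n"
  shows "\<exists>k<q. t \<le> card {b. b < n \<and> f b = k}"
proof -
  have "{..<q} \<noteq> {}" using assms by auto
  then obtain k where k: "k < q" and "card (f -` {k} \<inter> {..<n}) * card {..<q} \<ge> card {..<n}"
    using pigeonhole_card[of f "{..<n}" "{..<q}"] assms(1) by auto
  moreover have "f -` {k} \<inter> {..<n} = {b. b < n \<and> f b = k}" by auto
  ultimately have "(t - 1)*q < card {b. b < n \<and> f b = k} * q"
    using assms(2) by (metis card_lessThan less_le_trans)
  then show ?thesis using k by auto
qed

lemma OCAN_attained: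
  assumes "2 \<le> t" and "t \<le> m*s" and "0 < v"
  shows "\<exists>A. is_OCA A t m s v \<and> length A = OCAN t m s v"
proof -
  let ?A = "List.n_lists (m*s) [0..<v]"
  have "is_OCA ?A t m s v"
    unfolding is_OCA_def
  proof (intro conjI allI impI)
    show "set ?A \<subseteq> words v (m*s)" unfolding words_def set_n_lists by auto
  next
    fix J f assume J: "rt_anti_ideal m s J \<and> card J = t" and f: "\<forall>j\<in>J. f j < v"
    let ?r = "map (\<lambda>j. if j \<in> J then f j else 0) [0..<m*s]"
    have "?r \<in> set ?A" unfolding set_n_lists using f assms(3) by auto
    moreover have "\<forall>j\<in>J. ?r ! j = f j" using J unfolding rt_anti_ideal_def by auto
    ultimately show "\<exists>r\<in>set ?A. \<forall>j\<in>J. r ! j = f j" by blast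
  qed (use assms in auto)
  then have "\<exists>N A. is_OCA A t m s v \<and> length A = N" by blast
  from LeastI_ex[OF this] show ?thesis unfolding OCAN_def .
qed

lemma is_OCA_words: "is_OCA A t m s v \<Longrightarrow> set A \<subseteq> words v (m*s)"
  unfolding is_OCA_def by simp

lemma is_OCA_row:
  assumes "is_OCA A t m s v" and "rt_anti_ideal m s J" and "card J = t" and "\<forall>j\<in>J. f j < v"
  shows "\<exists>r\<in>set A. \<forall>j\<in>J. r ! j = f j"
  using assms unfolding is_OCA_def by (metis (no_types))

definition covers_block_tops :: "nat list set \<Rightarrow> nat \<Rightarrow> nat \<Rightarrow> nat \<Rightarrow> nat \<Rightarrow> bool" where
  "covers_block_tops R m s t v \<longleftrightarrow>
     (\<forall>B f. B \<subseteq> {..<m} \<longrightarrow> card B = t \<longrightarrow> (\<forall>b\<in>B. f b < v) \<longrightarrow>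
        (\<exists>w\<in>R. \<forall>b\<in>B. w ! rt_top s b = f b))"

lemma covers_block_tops_OCA:
  assumes A: "is_OCA A t m s v" and s: "0 < s"
  shows "covers_block_tops (set A) m s t v"
  unfolding covers_block_tops_def
proof (intro allI impI)
  fix B and f :: "nat \<Rightarrow> nat" assume B: "B \<subseteq> {..<m}" "card B = t" and f: "\<forall>b\<in>B. f b < v"
  have "card (rt_top s ` B) = t"
    using B card_image[OF inj_on_subset[OF inj_rt_top[OF s] subset_UNIV]] by simp
  moreover have "\<forall>j\<in>rt_top s ` B. f (j div s) < v" using f s by auto
  ultimately obtain r where "r \<in> set A" "\<forall>j\<in>rt_top s ` B. r ! j = f (j div s)"
    using is_OCA_row[OF A rt_anti_ideal_tops[OF s B(1)], where f="\<lambda>j. f (j div s)"] by blast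
  then show "\<exists>w\<in>set A. \<forall>b\<in>B. w ! rt_top s b = f b" using s by auto
qed

definition lift_code :: "nat \<Rightarrow> nat \<Rightarrow> nat list set \<Rightarrow> nat list set" where
  "lift_code q v R = (\<lambda>(k, w). map ((+) (k*v)) w) ` ({..<q} \<times> R)"

lemma card_lift_code_le: "finite R \<Longrightarrow> card (lift_code q v R) \<le> q * card R"
  unfolding lift_code_def
  using card_image_le[of "{..<q} \<times> R"] by (simp add: card_cartesian_product)

lemma lift_code_subset_words:
  assumes "R \<subseteq> words v n"
  shows "lift_code q v R \<subseteq> words (q*v) n"
proof
  fix c assume "c \<in> lift_code q v R"
  then obtain k w where k: "k < q" and w: "w \<in> R" and c: "c = map ((+) (k*v)) w"
    unfolding lift_code_def by auto
  have "k*v + a < q*v" if "a \<in> set w" for a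
  proof -
    have "a < v" using that w assms unfolding words_def by fastforce
    then have "k*v + a < (k + 1)*v" by simp
    also have "\<dots> \<le> q*v" using k by (intro mult_le_mono1) simp
    finally show ?thesis .
  qed
  then show "c \<in> words (q*v) n" using w assms c unfolding words_def by auto
qed

lemma rt_covering_lift_code:
  assumes R: "R \<subseteq> words v (m*s)" and s: "0 < s" and v: "0 < v"
    and cov: "covers_block_tops R m s t v" and many: "(t - 1)*q < m"
  shows "rt_covering (q*v) m s (m*s - t) (lift_code q v R)"
  unfolding rt_covering_def
proof (intro conjI ballI)
  show "lift_code q v R \<subseteq> words (q*v) (m*s)" using R by (rule lift_code_subset_words)
next
  fix x assume x: "x \<in> words (q*v) (m*s)"
  let ?hi = "\<lambda>b. x ! rt_top s b div v" and ?lo = "\<lambda>b. x ! rt_top s b mod v"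
  have "\<forall>b<m. ?hi b < q"
    using nth_words_less[OF x rt_top_less[OF s]] by (simp add: less_mult_imp_div_less)
  then obtain k where k: "k < q" and "t \<le> card {b. b < m \<and> ?hi b = k}"
    using pigeonhole_large_fibre[where f = ?hi, OF _ many] by blast
  from obtain_subset_with_card_n[OF this(2)]
  obtain B where B: "B \<subseteq> {b. b < m \<and> ?hi b = k}" and card_B: "card B = t" by blast
  moreover have "B \<subseteq> {..<m}" using B by auto
  ultimately obtain w where w: "w \<in> R" and w_B: "\<forall>b\<in>B. w ! rt_top s b = ?lo b"
    using cov[unfolded covers_block_tops_def, rule_format, of B ?lo] v by auto
  have len_w: "length w = m*s" using w R unfolding words_def by auto
  have agree: "\<forall>j\<in>rt_top s ` B. x ! j = map ((+) (k*v)) w ! j"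
  proof
    fix j assume "j \<in> rt_top s ` B"
    then obtain b where b: "b \<in> B" and j: "j = rt_top s b" by blast
    then have "j < m*s" using B rt_top_less[OF s] by auto
    then have "map ((+) (k*v)) w ! j = k*v + x ! j mod v" using len_w w_B b j by simp
    also have "\<dots> = x ! j"
      using B b j div_mult_mod_eq[of "x ! j" v] by auto
    finally show "x ! j = map ((+) (k*v)) w ! j" by simp
  qed
  have "rt_anti_ideal m s (rt_top s ` B)" using B s by (intro rt_anti_ideal_tops) auto
  moreover have "card (rt_top s ` B) = t"
    using card_B card_image[OF inj_on_subset[OF inj_rt_top[OF s] subset_UNIV]] by simp
  ultimately have "d_RT m s x (map ((+) (k*v)) w) \<le> m*s - t"
    using d_RT_le_if_agree_on_anti_ideal[OF _ agree] by simp
  moreover have "map ((+) (k*v)) w \<in> lift_code q v R" using k w unfolding lift_code_def by auto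
  ultimately show "\<exists>c\<in>lift_code q v R. d_RT m s x c \<le> m*s - t" by blast
qed

lemma K_RT_le_card: "rt_covering q m s R C \<Longrightarrow> K_RT q m s R \<le> card C"
  unfolding K_RT_def by (intro Least_le) blast

lemma K_RT_le_if_covers_block_tops:
  assumes "R \<subseteq> words v (m*s)" and "finite R" and "0 < s" and "0 < v"
    and "covers_block_tops R m s t v" and "(t - 1)*q < m"
  shows "K_RT (q*v) m s (m*s - t) \<le> q * card R"
proof -
  have "K_RT (q*v) m s (m*s - t) \<le> card (lift_code q v R)"
    using assms by (intro K_RT_le_card rt_covering_lift_code) auto
  also have "\<dots> \<le> q * card R" using assms(2) by (rule card_lift_code_le)
  finally show ?thesis .
qed

lemma K_RT_le_OCAN:
  assumes "0 < s" and "0 < v" and "2 \<le> t" and "t \<le> m*s" and "(t - 1)*q < m"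
  shows "K_RT (q*v) m s (m*s - t) \<le> q * OCAN t m s v"
proof -
  obtain A where A: "is_OCA A t m s v" and len_A: "length A = OCAN t m s v"
    using OCAN_attained assms(2-4) by blast
  have "K_RT (q*v) m s (m*s - t) \<le> q * card (set A)"
    using assms A by (intro K_RT_le_if_covers_block_tops is_OCA_words covers_block_tops_OCA) auto
  also have "\<dots> \<le> q * OCAN t m s v" using len_A card_length[of A] by simp
  finally show ?thesis .
qed

definition stretch :: "nat \<Rightarrow> nat list \<Rightarrow> nat list" where
  "stretch s b = map (\<lambda>j. b ! (j div s)) [0..<length b * s]"

definition stretch_complement :: "nat \<Rightarrow> nat list \<Rightarrow> nat list" where
  "stretch_complement s b = stretch s b @ stretch s (map (\<lambda>a. 1 - a) b)"

lemma length_stretch [simp]: "length (stretch s b) = length b * s"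
  unfolding stretch_def by simp

lemma set_stretch_subset: "set (stretch s b) \<subseteq> set b"
  unfolding stretch_def by (auto simp: less_mult_imp_div_less)

lemma nth_rt_top_stretch: "0 < s \<Longrightarrow> i < length b \<Longrightarrow> stretch s b ! rt_top s i = b ! i"
  unfolding stretch_def using rt_top_less[of s i "length b"] by simp

lemma nth_rt_top_stretch_complement:
  assumes "0 < s" and "length b = m" and "i < 2*m"
  shows "stretch_complement s b ! rt_top s i = (if i < m then b ! i else 1 - b ! (i - m))"
proof (cases "i < m")
  case True
  then show ?thesis
    using assms rt_top_less[of s i m] nth_rt_top_stretch[of s i b]
    unfolding stretch_complement_def by (simp add: nth_append)
next
  case False
  then have "rt_top s i = m*s + rt_top s (i - m)" using rt_top_add[of s m "i - m"] by simp
  then show ?thesis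
    using False assms nth_rt_top_stretch[of s "i - m" "map (\<lambda>a. 1 - a) b"]
    unfolding stretch_complement_def by (simp add: nth_append)
qed

lemma stretch_complement_words:
  "b \<in> words 2 m \<Longrightarrow> stretch_complement s b \<in> words 2 (2*m*s)"
  using set_stretch_subset[of s b] set_stretch_subset[of s "map (\<lambda>a. 1 - a) b"]
  unfolding words_def stretch_complement_def by auto

lemma nth_rt_top_append_self:
  assumes "0 < s" and "length r = m*s" and "i < 2*m"
  shows "(r @ r) ! rt_top s i = r ! rt_top s (i mod m)"
proof (cases "i < m")
  case True
  then show ?thesis using assms rt_top_less[of s i m] by (simp add: nth_append)
next
  case False
  then have "rt_top s i = m*s + rt_top s (i - m)" using rt_top_add[of s m "i - m"] by simp
  moreover have "i mod m = i - m" using False assms(3) by (simp add: le_mod_geq)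
  ultimately show ?thesis using False assms by (simp add: nth_append)
qed

lemma append_self_words: "r \<in> words v n \<Longrightarrow> r @ r \<in> words v (2*n)"
  unfolding words_def by auto

lemma same_residue_twins:
  assumes "x < y" and "y < 2*m" and "x mod m = (y mod m :: nat)"
  shows "x < m \<and> y = x + m"
proof -
  have "\<not> y < m" using assms by auto
  moreover have "\<not> m \<le> x"
    using assms calculation by (auto simp: le_mod_geq)
  ultimately show ?thesis using assms by (auto simp: le_mod_geq)
qed

lemma doubled_OCA_distinct_residues:
  assumes A: "is_OCA A t m s v" and s: "0 < s" and X: "X \<subseteq> {..<2*m}" "card X = t"
    and inj: "inj_on (\<lambda>b. b mod m) X" and f: "\<forall>b\<in>X. f b < v"
  shows "\<exists>r\<in>set A. \<forall>b\<in>X. (r @ r) ! rt_top s b = f b"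
proof -
  let ?res = "\<lambda>b. b mod m"
  have res_X: "?res ` X \<subseteq> {..<m}" using X(1) by fastforce
  have card_J: "card (rt_top s ` ?res ` X) = t"
    using X(2) inj card_image[OF inj_on_subset[OF inj_rt_top[OF s] subset_UNIV]] by (simp add: card_image)
  define g where "g j = f (the_inv_into X ?res (j div s))" for j
  have g_top: "g (rt_top s (b mod m)) = f b" if "b \<in> X" for b
    unfolding g_def using s the_inv_into_f_f[OF inj that] by simp
  then have "\<forall>j\<in>rt_top s ` ?res ` X. g j < v" using f by auto
  then obtain r where r: "r \<in> set A" and r_J: "\<forall>j\<in>rt_top s ` ?res ` X. r ! j = g j"
    using is_OCA_row[OF A rt_anti_ideal_tops[OF s res_X] card_J, where f = g] by blast
  have len_r: "length r = m*s" using r is_OCA_words[OF A] unfolding words_def by auto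
  have "(r @ r) ! rt_top s b = f b" if "b \<in> X" for b
    using that X(1) nth_rt_top_append_self[OF s len_r] r_J g_top by auto
  then show ?thesis using r by blast
qed

lemma doubled_OCA_equal_twins:
  assumes A: "is_OCA A 3 m s v" and s: "2 \<le> s" and i: "i < m"
    and c: "c < 2*m" "c mod m \<noteq> i"
    and f: "\<forall>b\<in>{i, i + m, c}. f b < v" and eq: "f (i + m) = f i"
  shows "\<exists>r\<in>set A. \<forall>b\<in>{i, i + m, c}. (r @ r) ! rt_top s b = f b"
proof -
  let ?j = "c mod m"
  have s0: "0 < s" using s by simp
  have top_ne: "rt_top s i \<noteq> rt_top s ?j"
    using rt_top_div[OF s0] c(2) by metis
  define J where "J = insert (rt_top s i - 1) (rt_top s ` {i, ?j})"
  have anti: "rt_anti_ideal m s J"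
    unfolding J_def using s i by (intro rt_anti_ideal_insert_below_top) auto
  have card_J: "card J = 3"
  proof -
    have "rt_top s i - 1 \<noteq> rt_top s ?j"
      using rt_top_minus_one_div[OF s, of i] rt_top_div[OF s0, of ?j] c(2) by metis
    moreover have "rt_top s i - 1 \<noteq> rt_top s i"
      using s unfolding rt_top_def by simp
    moreover note top_ne
    ultimately show ?thesis unfolding J_def by simp
  qed
  define g where "g x = (if x = rt_top s ?j then f c else f i)" for x
  have "\<forall>x\<in>J. g x < v" using f unfolding g_def by auto
  then obtain r where r: "r \<in> set A" and r_J: "\<forall>x\<in>J. r ! x = g x"
    using is_OCA_row[OF A anti card_J, where f = g] by blast
  have len_r: "length r = m*s" using r is_OCA_words[OF A] unfolding words_def by auto
  have "r ! rt_top s i = f i" "r ! rt_top s ?j = f c"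
    using r_J top_ne unfolding J_def g_def by auto
  then have "(r @ r) ! rt_top s b = f b" if "b \<in> {i, i + m, c}" for b
    using that i c eq nth_rt_top_append_self[OF s0 len_r] by auto
  then show ?thesis using r by blast
qed

lemma stretched_CA_distinct_twins:
  assumes B: "is_OCA B 2 m 1 2" and s: "0 < s" and i: "i < m"
    and c: "c < 2*m" "c mod m \<noteq> i"
    and f: "\<forall>b\<in>{i, i + m, c}. f b < 2" and ne: "f (i + m) \<noteq> f i"
  shows "\<exists>r\<in>set B. \<forall>b\<in>{i, i + m, c}. stretch_complement s r ! rt_top s b = f b"
proof -
  let ?j = "c mod m"
  have anti: "rt_anti_ideal m 1 {i, ?j}"
    using rt_anti_ideal_tops[of 1 "{i, ?j}" m] i by (simp add: rt_top_def)
  have card_J: "card {i, ?j} = 2" using c(2) by simp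
  define g where "g x = (if x = ?j then (if c < m then f c else 1 - f c) else f i)" for x
  have "\<forall>x\<in>{i, ?j}. g x < 2" using f unfolding g_def by auto
  then obtain r where r: "r \<in> set B" and r_J: "\<forall>x\<in>{i, ?j}. r ! x = g x"
    using is_OCA_row[OF B anti card_J, where f = g] by blast
  have len_r: "length r = m" using r is_OCA_words[OF B] unfolding words_def by auto
  have "r ! i = f i" "r ! ?j = (if c < m then f c else 1 - f c)"
    using r_J c(2) unfolding g_def by auto
  moreover have "c - m = ?j" if "\<not> c < m" using that c(1) by (simp add: le_mod_geq)
  ultimately have "stretch_complement s r ! rt_top s b = f b" if "b \<in> {i, i + m, c}" for b
    using that i c f ne nth_rt_top_stretch_complement[OF s len_r] by auto
  then show ?thesis using r by blast
qed

lemma covers_block_tops_doubled: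
  assumes A: "is_OCA A 3 m s 2" and B: "is_OCA B 2 m 1 2" and s: "2 \<le> s"
  shows "covers_block_tops ((\<lambda>r. r @ r) ` set A \<union> stretch_complement s ` set B) (2*m) s 3 2"
  unfolding covers_block_tops_def
proof (intro allI impI)
  fix X and f :: "nat \<Rightarrow> nat" assume X: "X \<subseteq> {..<2*m}" "card X = 3" and f: "\<forall>b\<in>X. f b < 2"
  show "\<exists>w\<in>(\<lambda>r. r @ r) ` set A \<union> stretch_complement s ` set B. \<forall>b\<in>X. w ! rt_top s b = f b"
  proof (cases "inj_on (\<lambda>b. b mod m) X")
    case True
    then show ?thesis using doubled_OCA_distinct_residues[OF A _ X True f] s by auto
  next
    case False
    then obtain i i' where i: "i \<in> X" "i' \<in> X" "i < i'" "i mod m = i' mod m"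
      unfolding inj_on_def by (metis linorder_neqE_nat)
    then have "i < m" and i': "i' = i + m" using X(1) same_residue_twins by auto
    have "card (X - {i, i'}) = 1" using X(2) i by (simp add: card_Diff_subset)
    then obtain c where "X - {i, i'} = {c}" by (rule card_1_singletonE)
    then have X_eq: "X = {i, i + m, c}" and c_ne: "c \<noteq> i" "c \<noteq> i + m" using i i' by auto
    then have "c < 2*m" using X(1) by auto
    then have "c mod m \<noteq> i"
      using c_ne \<open>i < m\<close> by (cases "c < m") (auto simp: le_mod_geq)
    consider "f (i + m) = f i" | "f (i + m) \<noteq> f i" by blast
    then show ?thesis
    proof cases
      case 1
      have "\<exists>r\<in>set A. \<forall>b\<in>X. (r @ r) ! rt_top s b = f b"
        using doubled_OCA_equal_twins[OF A s \<open>i < m\<close> \<open>c < 2*m\<close> \<open>c mod m \<noteq> i\<close>, of f] f 1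
        unfolding X_eq by simp
      then show ?thesis by blast
    next
      case 2
      have "0 < s" using s by simp
      then have "\<exists>r\<in>set B. \<forall>b\<in>X. stretch_complement s r ! rt_top s b = f b"
        using stretched_CA_distinct_twins[OF B _ \<open>i < m\<close> \<open>c < 2*m\<close> \<open>c mod m \<noteq> i\<close>, of s f] f 2
        unfolding X_eq by simp
      then show ?thesis by blast
    qed
  qed
qed

lemma K_RT_le_OCAN_CAN:
  assumes "0 < q" and "q < m" and "2 \<le> s"
  shows "K_RT (2*q) (2*m) s (2*m*s - 3) \<le> q * (OCAN 3 m s 2 + CAN 2 m 2)"
proof -
  have "2*2 \<le> m*s" using assms by (intro mult_le_mono) auto
  then obtain A where A: "is_OCA A 3 m s 2" and len_A: "length A = OCAN 3 m s 2"
    using OCAN_attained[of 3 m s 2] by auto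
  obtain B where B: "is_OCA B 2 m 1 2" and len_B: "length B = CAN 2 m 2"
    using OCAN_attained[of 2 m 1 2] assms unfolding CAN_def by auto
  let ?R = "(\<lambda>r. r @ r) ` set A \<union> stretch_complement s ` set B"
  have words_R: "?R \<subseteq> words 2 (2*m*s)"
    using is_OCA_words[OF A] is_OCA_words[OF B] append_self_words[of _ 2 "m*s"]
      stretch_complement_words[of _ m s] by (auto simp: mult.assoc)
  have card_R: "card ?R \<le> length A + length B"
  proof -
    have "card ?R \<le> card ((\<lambda>r. r @ r) ` set A) + card (stretch_complement s ` set B)"
      by (rule card_Un_le)
    also have "\<dots> \<le> length A + length B"
      by (intro add_mono order_trans[OF card_image_le card_length]) simp_all
    finally show ?thesis .
  qed
  from words_R have "K_RT (q*2) (2*m) s (2*m*s - 3) \<le> q * card ?R"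
    using assms covers_block_tops_doubled[OF A B] by (intro K_RT_le_if_covers_block_tops) auto
  also have "\<dots> \<le> q * (OCAN 3 m s 2 + CAN 2 m 2)" using card_R len_A len_B by simp
  finally show ?thesis by (simp add: mult.commute)
qed

theorem corollary5:
  shows "(\<forall>q m s::nat. 0 < q \<and> q < m \<and> m \<le> 2*q \<and> s \<in> {2,3} \<longrightarrow>
            K_RT (2*q) (2*m) s (2*m*s - 3) \<le> q * (OCAN 3 m s 2 + CAN 2 m 2))
       \<and> (\<forall>q v m s t::nat. 2 \<le> q \<and> 2 \<le> v \<and> 0 < m \<and> 0 < s \<and> 2 \<le> t \<and> s \<le> t \<and> t \<le> m*s \<and>
            (t-1)*q + 1 \<le> m \<and> m \<le> (t-1)*q*v \<longrightarrow>
            K_RT (q*v) m s (m*s - t) \<le> q * OCAN t m s v)"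
proof (intro conjI allI impI)
  fix q m s :: nat assume "0 < q \<and> q < m \<and> m \<le> 2*q \<and> s \<in> {2,3}"
  then show "K_RT (2*q) (2*m) s (2*m*s - 3) \<le> q * (OCAN 3 m s 2 + CAN 2 m 2)"
    by (intro K_RT_le_OCAN_CAN) auto
next
  fix q v m s t :: nat
  assume "2 \<le> q \<and> 2 \<le> v \<and> 0 < m \<and> 0 < s \<and> 2 \<le> t \<and> s \<le> t \<and> t \<le> m*s \<and>
    (t-1)*q + 1 \<le> m \<and> m \<le> (t-1)*q*v"
  then show "K_RT (q*v) m s (m*s - t) \<le> q * OCAN t m s v"
    by (intro K_RT_le_OCAN) auto
qed

end
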